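(* Let $F^r$ be the free group of rank $r$ and $s_*\colon F^r\to F^r$ an endomorphism whose image $\mathrm{Im}\,s_*$ is free of rank $r$. Let $s_*^{ab}\colon\mathbb Z^r\to\mathbb Z^r$ be the induced endomorphism of the abelianisation. Then: (1) $\lim^1(s_* )^n$ is trivial if and only if $s_*$ is an isomorphism; (2) if $s_*^{ab}$ is not an isomorphism, then $\lim^1(s_* )^n$ is not trivial.
   Context: $\lim^1(s_* )^n$ denotes $\lim^1$ of the inverse sequence $\cdots\to F^r\xrightarrow{s_*}F^r\xrightarrow{s_*}F^r$. For an inverse sequence of groups $\cdots\to A_1\xrightarrow{a_1}A_0$, $\lim^1$ is the pointed set of classes of $\prod_nA_n$ under $(x_n)\approx(y_n)$ iff $y_n=g_nx_na_{n+1}(g_{n+1}^{-1})$ for some $(g_n)$, based at the class of the identity; trivial means a single point. *)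

theory Defs
  imports "HOL-Algebra.Algebra"
begin

text \<open>Free group of rank r: reduced words over letters (b, i) with i < r;
  (False, i) is the generator x_i and (True, i) its inverse.\<close>

type_synonym letter = "bool \<times> nat"

definition inv_letter :: "letter \<Rightarrow> letter" where
  "inv_letter x = (\<not> fst x, snd x)"

fun reduced :: "letter list \<Rightarrow> bool" where
  "reduced [] = True"
| "reduced [x] = True"
| "reduced (x # y # ys) = (y \<noteq> inv_letter x \<and> reduced (y # ys))"

fun cons_red :: "letter \<Rightarrow> letter list \<Rightarrow> letter list" where
  "cons_red x [] = [x]"
| "cons_red x (y # ys) = (if y = inv_letter x then ys else x # y # ys)"

definition reduce :: "letter list \<Rightarrow> letter list" where
  "reduce w = foldr cons_red w []"

definition free_group :: "nat \<Rightarrow> letter list monoid" where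
  "free_group r = \<lparr> carrier = {w. reduced w \<and> (\<forall>x\<in>set w. snd x < r)},
                    monoid.mult = (\<lambda>u v. reduce (u @ v)),
                    one = [] \<rparr>"

text \<open>Abelianisation F^r \<rightarrow> Z^r (exponent sums), with Z^r = functions vanishing at indices \<ge> r.\<close>

definition Zr :: "nat \<Rightarrow> (nat \<Rightarrow> int) set" where
  "Zr r = {v. \<forall>i\<ge>r. v i = 0}"

definition ab :: "letter list \<Rightarrow> nat \<Rightarrow> int" where
  "ab w i = sum_list (map (\<lambda>x. if snd x = i then (if fst x then -1 else 1) else 0) w)"

text \<open>Induced endomorphism of the abelianisation: the unique homomorphism Z^r \<rightarrow> Z^r
  sending the basis vector e_j = ab(x_j) to ab(s(x_j)).\<close>

definition s_ab :: "nat \<Rightarrow> (letter list \<Rightarrow> letter list) \<Rightarrow> (nat \<Rightarrow> int) \<Rightarrow> nat \<Rightarrow> int" where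
  "s_ab r s v = (\<lambda>i. if i < r then (\<Sum>j<r. v j * ab (s [(False, j)]) i) else 0)"

text \<open>lim^1 of the inverse sequence ... \<rightarrow> G \<rightarrow>a G \<rightarrow>a G (constant group G, bonding map a).\<close>

definition lim1_rel :: "('g, 'm) monoid_scheme \<Rightarrow> ('g \<Rightarrow> 'g) \<Rightarrow> ((nat \<Rightarrow> 'g) \<times> (nat \<Rightarrow> 'g)) set" where
  "lim1_rel G a = {(x, y). (\<forall>n. x n \<in> carrier G) \<and> (\<forall>n. y n \<in> carrier G) \<and>
     (\<exists>g. (\<forall>n. g n \<in> carrier G) \<and>
          (\<forall>n. y n = g n \<otimes>\<^bsub>G\<^esub> x n \<otimes>\<^bsub>G\<^esub> a (inv\<^bsub>G\<^esub> (g (Suc n)))))}"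

definition lim1 :: "('g, 'm) monoid_scheme \<Rightarrow> ('g \<Rightarrow> 'g) \<Rightarrow> (nat \<Rightarrow> 'g) set set" where
  "lim1 G a = (UNIV \<rightarrow> carrier G) // lim1_rel G a"

definition lim1_trivial :: "('g, 'm) monoid_scheme \<Rightarrow> ('g \<Rightarrow> 'g) \<Rightarrow> bool" where
  "lim1_trivial G a \<longleftrightarrow> is_singleton (lim1 G a)"

end

theory Submission
  imports Defs "HOL-Library.Countable_Set" "HOL-Combinatorics.Permutations"
begin

text \<open>Since \<open>Im s\<^sub>*\<close> is free of rank \<open>r\<close>, composing \<open>s\<^sub>*\<close> with an isomorphism
  \<open>Im s\<^sub>* \<cong> F\<^sup>r\<close> gives a surjective endomorphism of \<open>F\<^sup>r\<close>; free groups of finite rank are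
  Hopfian, so \<open>s\<^sub>*\<close> is injective. If \<open>s\<^sub>*\<close> is also surjective, any two sequences are related,
  the gauge being solved for term by term. If it is not, an element \<open>c\<close> outside the image
  yields, for every \<open>\<beta> \<subseteq> \<nat>\<close>, the sequence equal to \<open>c\<close> on \<open>\<beta>\<close> and to \<open>1\<close> elsewhere; a
  gauge relating it to the trivial sequence determines \<open>\<beta>\<close> by its value at \<open>0\<close>, so triviality
  of \<open>lim\<^sup>1\<close> would inject the uncountable \<open>Pow \<nat>\<close> into the countable group \<open>F\<^sup>r\<close>.
  Part (2) follows from (1), because an automorphism of \<open>F\<^sup>r\<close> induces one of \<open>\<int>\<^sup>r\<close>.\<close>

section \<open>The free group on reduced words\<close>

abbreviation reduce_onto :: "letter list \<Rightarrow> letter list \<Rightarrow> letter list" where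
  "reduce_onto x z \<equiv> foldr cons_red x z"

lemma inv_letter_inv_letter [simp]: "inv_letter (inv_letter l) = l"
  by (simp add: inv_letter_def)

lemma reduced_Cons_tl: "reduced (x # xs) \<Longrightarrow> reduced xs"
  by (cases xs) auto

lemma reduced_cons_red: "reduced v \<Longrightarrow> reduced (cons_red l v)"
  by (cases v) (auto dest: reduced_Cons_tl)

lemma set_cons_red: "set (cons_red l v) \<subseteq> insert l (set v)"
  by (cases v) auto

lemma reduced_reduce_onto: "reduced z \<Longrightarrow> reduced (reduce_onto x z)"
  by (induction x) (auto intro: reduced_cons_red)

lemma set_reduce_onto: "set (reduce_onto x z) \<subseteq> set x \<union> set z"
  by (induction x) (use set_cons_red in fastforce)+

lemma reduced_reduce: "reduced (reduce w)"
  unfolding reduce_def by (rule reduced_reduce_onto) simp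

lemma set_reduce: "set (reduce w) \<subseteq> set w"
  unfolding reduce_def using set_reduce_onto[of w "[]"] by simp

lemma cons_red_cancel: "reduced t \<Longrightarrow> cons_red l (cons_red (inv_letter l) t) = t"
  by (cases t rule: reduced.cases) auto

lemma reduce_onto_cons_red: "reduced z \<Longrightarrow> reduce_onto (cons_red l v) z = cons_red l (reduce_onto v z)"
  by (cases v) (auto simp: cons_red_cancel reduced_reduce_onto)

lemma reduce_onto_reduce: "reduced z \<Longrightarrow> reduce_onto (reduce x) z = reduce_onto x z"
  by (induction x) (auto simp: reduce_def reduce_onto_cons_red)

lemma reduce_onto_Nil_reduced: "reduced x \<Longrightarrow> reduce_onto x [] = x"
  by (induction x rule: reduced.induct) auto

lemma reduce_reduced: "reduced x \<Longrightarrow> reduce x = x"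
  by (simp add: reduce_def reduce_onto_Nil_reduced)

lemma reduce_append: "reduce (u @ v) = reduce_onto u (reduce v)"
  by (simp add: reduce_def)

lemma reduce_onto_inverse: "reduce_onto (rev (map inv_letter x)) (x @ z) = z"
  by (induction x arbitrary: z) auto

lemma free_group_carrier_iff:
  "w \<in> carrier (free_group r) \<longleftrightarrow> reduced w \<and> (\<forall>x\<in>set w. snd x < r)"
  by (simp add: free_group_def)

lemma free_group_mult: "u \<otimes>\<^bsub>free_group r\<^esub> v = reduce (u @ v)"
  by (simp add: free_group_def)

lemma free_group_one [simp]: "\<one>\<^bsub>free_group r\<^esub> = []"
  by (simp add: free_group_def)

lemma group_free_group: "group (free_group r)"
proof (rule groupI)
  fix x y assume "x \<in> carrier (free_group r)" "y \<in> carrier (free_group r)"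
  then show "x \<otimes>\<^bsub>free_group r\<^esub> y \<in> carrier (free_group r)"
    using set_reduce[of "x @ y"] by (auto simp: free_group_carrier_iff free_group_mult reduced_reduce)
next
  fix x y z
  have "reduce (reduce (x @ y) @ z) = reduce_onto (x @ y) (reduce z)"
    by (simp only: reduce_append[of "reduce (x @ y)"] reduce_onto_reduce reduced_reduce)
  also have "\<dots> = reduce (x @ reduce (y @ z))"
    by (simp add: reduce_append reduce_reduced reduced_reduce_onto reduced_reduce)
  finally show "x \<otimes>\<^bsub>free_group r\<^esub> y \<otimes>\<^bsub>free_group r\<^esub> z
      = x \<otimes>\<^bsub>free_group r\<^esub> (y \<otimes>\<^bsub>free_group r\<^esub> z)"
    by (simp add: free_group_mult)
next
  fix x assume "x \<in> carrier (free_group r)"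
  then show "\<one>\<^bsub>free_group r\<^esub> \<otimes>\<^bsub>free_group r\<^esub> x = x"
    by (simp add: free_group_carrier_iff free_group_mult reduce_reduced)
next
  fix x assume x: "x \<in> carrier (free_group r)"
  let ?y = "reduce (rev (map inv_letter x))"
  have "?y \<otimes>\<^bsub>free_group r\<^esub> x = []"
    using x reduce_onto_inverse[of x "[]"]
    by (simp add: free_group_mult reduce_append reduce_onto_reduce free_group_carrier_iff reduce_reduced)
  moreover have "?y \<in> carrier (free_group r)"
    using x set_reduce[of "rev (map inv_letter x)"]
    by (fastforce simp: free_group_carrier_iff reduced_reduce inv_letter_def)
  ultimately show "\<exists>y\<in>carrier (free_group r). y \<otimes>\<^bsub>free_group r\<^esub> x = \<one>\<^bsub>free_group r\<^esub>"
    by auto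
qed (simp add: free_group_carrier_iff)

lemma countable_free_group_carrier: "countable (carrier (free_group r))"
  by (rule countableI_type)

lemma free_group_Cons_tl: "l # u \<in> carrier (free_group r) \<Longrightarrow> u \<in> carrier (free_group r)"
  using reduced_Cons_tl[of l u] by (simp add: free_group_carrier_iff)

lemma generator_in_free_group: "i < r \<Longrightarrow> [(b, i)] \<in> carrier (free_group r)"
  by (simp add: free_group_carrier_iff)

lemma free_group_inv_generator: "i < r \<Longrightarrow> inv\<^bsub>free_group r\<^esub> [(False, i)] = [(True, i)]"
  by (rule group.inv_equality[OF group_free_group])
    (simp_all add: generator_in_free_group free_group_mult reduce_def inv_letter_def)

lemma Cons_eq_generator_mult:
  assumes "l # u \<in> carrier (free_group r)"
  shows "l # u = [l] \<otimes>\<^bsub>free_group r\<^esub> u"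
proof -
  have "reduced u" using free_group_Cons_tl[OF assms] by (simp add: free_group_carrier_iff)
  then have "[l] \<otimes>\<^bsub>free_group r\<^esub> u = cons_red l u"
    by (simp add: free_group_mult reduce_def reduce_onto_Nil_reduced)
  also have "\<dots> = l # u" using assms by (cases u) (auto simp: free_group_carrier_iff)
  finally show ?thesis by simp
qed

lemma free_group_hom_ext:
  assumes "group H" and \<phi>: "\<phi> \<in> hom (free_group r) H" and \<psi>: "\<psi> \<in> hom (free_group r) H"
    and gen: "\<And>i. i < r \<Longrightarrow> \<phi> [(False, i)] = \<psi> [(False, i)]"
    and u: "u \<in> carrier (free_group r)"
  shows "\<phi> u = \<psi> u"
  using u
proof (induction u)
  case Nil
  then show ?case
    using hom_one[OF \<phi> group_free_group \<open>group H\<close>] hom_one[OF \<psi> group_free_group \<open>group H\<close>] by simp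
next
  case (Cons l u)
  obtain b i where l: "l = (b, i)" by fastforce
  have i: "i < r" using Cons.prems l by (simp add: free_group_carrier_iff)
  have u: "u \<in> carrier (free_group r)" using free_group_Cons_tl[OF Cons.prems] .
  have lc: "[l] \<in> carrier (free_group r)" using generator_in_free_group[OF i] l by simp
  have inv_gen: "\<chi> [(True, i)] = inv\<^bsub>H\<^esub> \<chi> [(False, i)]" if "\<chi> \<in> hom (free_group r) H" for \<chi>
    using group_hom.hom_inv[of "free_group r" H \<chi> "[(False, i)]"] that \<open>group H\<close>
    by (simp add: group_hom_def group_hom_axioms_def group_free_group
        free_group_inv_generator[OF i] generator_in_free_group[OF i])
  have split: "\<chi> (l # u) = \<chi> [l] \<otimes>\<^bsub>H\<^esub> \<chi> u" if "\<chi> \<in> hom (free_group r) H" for \<chi>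
    by (subst Cons_eq_generator_mult[OF Cons.prems]) (rule hom_mult[OF that lc u])
  have "\<phi> [l] = \<psi> [l]" using gen[OF i] inv_gen[OF \<phi>] inv_gen[OF \<psi>] l by (cases b) simp_all
  then show ?case using Cons.IH[OF u] by (simp add: split[OF \<phi>] split[OF \<psi>])
qed

section \<open>Permutation representations and the Hopf property\<close>

definition letter_perm :: "(nat \<Rightarrow> nat \<Rightarrow> nat) \<Rightarrow> letter \<Rightarrow> nat \<Rightarrow> nat" where
  "letter_perm \<sigma> l = (if fst l then inv' (\<sigma> (snd l)) else \<sigma> (snd l))"

definition word_perm :: "(nat \<Rightarrow> nat \<Rightarrow> nat) \<Rightarrow> letter list \<Rightarrow> nat \<Rightarrow> nat" where
  "word_perm \<sigma> w = foldr (\<lambda>l p. letter_perm \<sigma> l \<circ> p) w id"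

lemma word_perm_Nil [simp]: "word_perm \<sigma> [] = id"
  by (simp add: word_perm_def)

lemma word_perm_Cons [simp]: "word_perm \<sigma> (l # w) = letter_perm \<sigma> l \<circ> word_perm \<sigma> w"
  by (simp add: word_perm_def)

lemma word_perm_append: "word_perm \<sigma> (u @ v) = word_perm \<sigma> u \<circ> word_perm \<sigma> v"
  by (induction u) auto

lemma letter_perm_generator [simp]: "letter_perm \<sigma> (False, i) = \<sigma> i"
  by (simp add: letter_perm_def)

lemma word_perm_cong: "(\<And>l. l \<in> set w \<Longrightarrow> \<sigma> (snd l) = \<tau> (snd l)) \<Longrightarrow> word_perm \<sigma> w = word_perm \<tau> w"
  by (induction w) (auto simp: letter_perm_def)

lemma letter_perm_inv_letter:
  assumes "bij (\<sigma> (snd l))"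
  shows "letter_perm \<sigma> l \<circ> letter_perm \<sigma> (inv_letter l) = id"
  using inv_o_cancel[OF bij_is_inj[OF assms]] surj_iff[THEN iffD1, OF bij_is_surj[OF assms]]
  by (auto simp: letter_perm_def inv_letter_def)

lemma word_perm_reduce:
  assumes "\<And>i. bij (\<sigma> i)"
  shows "word_perm \<sigma> (reduce w) = word_perm \<sigma> w"
proof -
  have cons_red: "word_perm \<sigma> (cons_red l v) = letter_perm \<sigma> l \<circ> word_perm \<sigma> v" for l v
    by (cases v)
      (auto simp: fun.map_comp letter_perm_inv_letter[OF assms] comp_assoc[symmetric])
  have "word_perm \<sigma> (reduce_onto w z) = word_perm \<sigma> w \<circ> word_perm \<sigma> z" for z
    by (induction w) (auto simp: cons_red comp_assoc)
  from this[of "[]"] show ?thesis by (simp add: reduce_def)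
qed

text \<open>An element of \<open>sym_assignments r n\<close> is a homomorphism \<open>F\<^sup>r \<rightarrow> S\<^sub>n\<close>, recorded by
  the images of the generators.\<close>

definition sym_assignments :: "nat \<Rightarrow> nat \<Rightarrow> (nat \<Rightarrow> nat \<Rightarrow> nat) set" where
  "sym_assignments r n = {\<sigma>. \<forall>i. (i \<in> {..<r} \<longrightarrow> \<sigma> i \<in> carrier (sym_group n)) \<and> (i \<notin> {..<r} \<longrightarrow> \<sigma> i = id)}"

lemma sym_assignments_permutes: "\<sigma> \<in> sym_assignments r n \<Longrightarrow> \<sigma> i permutes {1..n}"
  by (cases "i < r") (auto simp: sym_assignments_def sym_group_carrier)

lemma finite_sym_assignments: "finite (sym_assignments r n)"
  unfolding sym_assignments_def
  by (intro finite_set_of_finite_funs)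
    (simp_all add: sym_group_def finite_permutations)

lemma word_perm_permutes:
  assumes "\<And>i. \<sigma> i permutes S"
  shows "word_perm \<sigma> w permutes S"
proof (induction w)
  case (Cons l w)
  have "letter_perm \<sigma> l permutes S" using assms by (simp add: letter_perm_def permutes_inv)
  then show ?case using Cons.IH unfolding word_perm_Cons by (rule permutes_compose[rotated])
qed (simp only: word_perm_Nil permutes_id)

lemma word_perm_hom:
  assumes "\<sigma> \<in> sym_assignments r n"
  shows "word_perm \<sigma> \<in> hom (free_group r) (sym_group n)"
proof (rule homI)
  fix u show "word_perm \<sigma> u \<in> carrier (sym_group n)"
    using word_perm_permutes[OF sym_assignments_permutes[OF assms]] by (simp add: sym_group_carrier)
next
  fix u v
  have "\<And>i. bij (\<sigma> i)" using assms sym_assignments_permutes permutes_bij by blast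
  then show "word_perm \<sigma> (u \<otimes>\<^bsub>free_group r\<^esub> v) = word_perm \<sigma> u \<otimes>\<^bsub>sym_group n\<^esub> word_perm \<sigma> v"
    by (simp add: free_group_mult sym_group_mult word_perm_reduce word_perm_append)
qed

definition pullback_assignment ::
    "nat \<Rightarrow> (letter list \<Rightarrow> letter list) \<Rightarrow> (nat \<Rightarrow> nat \<Rightarrow> nat) \<Rightarrow> nat \<Rightarrow> nat \<Rightarrow> nat" where
  "pullback_assignment r f \<sigma> = (\<lambda>i. if i < r then word_perm \<sigma> (f [(False, i)]) else id)"

lemma pullback_assignment_in_sym_assignments:
  "\<sigma> \<in> sym_assignments r n \<Longrightarrow> pullback_assignment r f \<sigma> \<in> sym_assignments r n"
  using word_perm_permutes[OF sym_assignments_permutes]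
  by (auto simp: sym_assignments_def pullback_assignment_def sym_group_carrier)

lemma word_perm_pullback_assignment:
  assumes f: "f \<in> hom (free_group r) (free_group r)" and \<sigma>: "\<sigma> \<in> sym_assignments r n"
    and u: "u \<in> carrier (free_group r)"
  shows "word_perm \<sigma> (f u) = word_perm (pullback_assignment r f \<sigma>) u"
proof -
  have "(word_perm \<sigma> \<circ> f) u = word_perm (pullback_assignment r f \<sigma>) u"
  proof (rule free_group_hom_ext[OF sym_group_is_group _ _ _ u])
    show "word_perm \<sigma> \<circ> f \<in> hom (free_group r) (sym_group n)"
      using f word_perm_hom[OF \<sigma>] by (rule hom_compose)
    show "word_perm (pullback_assignment r f \<sigma>) \<in> hom (free_group r) (sym_group n)"
      using \<sigma> by (intro word_perm_hom pullback_assignment_in_sym_assignments)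
  qed (simp add: pullback_assignment_def)
  then show ?thesis by simp
qed

lemma reduced_nth_Suc: "reduced w \<Longrightarrow> Suc k < length w \<Longrightarrow> w ! Suc k \<noteq> inv_letter (w ! k)"
  by (induction w arbitrary: k rule: reduced.induct) (auto simp: nth_Cons split: nat.splits)

lemma inj_on_extends_to_permutation:
  assumes "finite B" "A \<subseteq> B" "inj_on g A" "g ` A \<subseteq> B"
  obtains p where "p permutes B" "\<And>x. x \<in> A \<Longrightarrow> p x = g x"
proof -
  have "finite A" using assms finite_subset by blast
  then have "card (B - A) = card (B - g ` A)"
    using assms by (simp add: card_Diff_subset card_image)
  then obtain h where h: "bij_betw h (B - A) (B - g ` A)"
    using assms by (meson finite_Diff finite_same_card_bij)
  have "bij_betw (\<lambda>x. if x \<in> A then g x else h x) (A \<union> (B - A)) (g ` A \<union> (B - g ` A))"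
    using assms(3) by (intro bij_betw_disjoint_Un h) (auto simp: bij_betw_def)
  moreover have "A \<union> (B - A) = B" "g ` A \<union> (B - g ` A) = B" using assms by auto
  ultimately have "bij_betw (\<lambda>x. if x \<in> A then g x else h x) B B" by simp
  then have "(\<lambda>x. if x \<in> B then if x \<in> A then g x else h x else x) permutes B"
    by (intro bij_imp_permutes) (auto simp: bij_betw_def inj_on_def)
  then show ?thesis by (rule that) (use assms(2) in auto)
qed

text \<open>The word \<open>w = w\<^sub>0 \<cdots> w\<^sub>n\<^sub>-\<^sub>1\<close> will act by walking the point \<open>n + 1\<close> down to \<open>1\<close>,
  the letter \<open>w\<^sub>k\<close> moving \<open>k + 2\<close> to \<open>k + 1\<close>. Reducedness is exactly what makes these
  prescriptions consistent for each generator.\<close>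

lemma reduced_word_generator_permutation:
  assumes "reduced w"
  obtains p where "p permutes {1..Suc (length w)}"
    and "\<And>k. k < length w \<Longrightarrow> w ! k = (False, i) \<Longrightarrow> p (Suc (Suc k)) = Suc k"
    and "\<And>k. k < length w \<Longrightarrow> w ! k = (True, i) \<Longrightarrow> p (Suc k) = Suc (Suc k)"
proof -
  define n where "n = length w"
  define Pos where "Pos = {Suc (Suc k) | k. k < n \<and> w ! k = (False, i)}"
  define Neg where "Neg = {Suc k | k. k < n \<and> w ! k = (True, i)}"
  define g where "g x = (if x \<in> Pos then x - 1 else Suc x)" for x
  have no_cancel: "k' \<noteq> Suc k \<and> k \<noteq> Suc k'"
    if "k < n" "w ! k = (False, i)" "k' < n" "w ! k' = (True, i)" for k k'
    using that reduced_nth_Suc[OF assms, of k] reduced_nth_Suc[OF assms, of k']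
    by (auto simp: n_def inv_letter_def)
  have disjoint: "Pos \<inter> Neg = {}"
    using no_cancel unfolding Pos_def Neg_def by blast
  have g_Pos: "g (Suc (Suc k)) = Suc k" if "k < n" "w ! k = (False, i)" for k
    using that by (auto simp: g_def Pos_def)
  have g_Neg: "g (Suc k) = Suc (Suc k)" if "k < n" "w ! k = (True, i)" for k
    using that disjoint by (auto simp: g_def Neg_def)
  have "inj_on g Pos" by (rule inj_onI) (auto simp: Pos_def g_Pos)
  moreover have "inj_on g Neg" by (rule inj_onI) (auto simp: Neg_def g_Neg)
  moreover have "g x \<noteq> g x'" if "x \<in> Pos" "x' \<in> Neg" for x x'
    using that no_cancel by (auto simp: Pos_def Neg_def g_Pos g_Neg)
  ultimately have "inj_on g (Pos \<union> Neg)" unfolding inj_on_Un by blast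
  moreover have "Pos \<union> Neg \<subseteq> {1..Suc n}" "g ` (Pos \<union> Neg) \<subseteq> {1..Suc n}"
    by (auto simp: Pos_def Neg_def g_Pos g_Neg)
  ultimately obtain p where p: "p permutes {1..Suc n}" "\<And>x. x \<in> Pos \<union> Neg \<Longrightarrow> p x = g x"
    using inj_on_extends_to_permutation[of "{1..Suc n}"] by blast
  show ?thesis
  proof (rule that)
    show "p permutes {1..Suc (length w)}" using p(1) by (simp add: n_def)
  next
    fix k assume "k < length w" "w ! k = (False, i)"
    then show "p (Suc (Suc k)) = Suc k" using p(2)[of "Suc (Suc k)"] g_Pos by (auto simp: n_def Pos_def)
  next
    fix k assume "k < length w" "w ! k = (True, i)"
    then show "p (Suc k) = Suc (Suc k)" using p(2)[of "Suc k"] g_Neg by (auto simp: n_def Neg_def)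
  qed
qed

lemma reduced_word_perm_moves_point:
  assumes "reduced w"
  obtains \<sigma> where "\<And>i. \<sigma> i permutes {1..Suc (length w)}" "word_perm \<sigma> w (Suc (length w)) = 1"
proof -
  define n where "n = length w"
  have "\<forall>i. \<exists>p. p permutes {1..Suc n} \<and> (\<forall>k<n. w ! k = (False, i) \<longrightarrow> p (Suc (Suc k)) = Suc k)
      \<and> (\<forall>k<n. w ! k = (True, i) \<longrightarrow> p (Suc k) = Suc (Suc k))"
  proof
    fix i show "\<exists>p. p permutes {1..Suc n} \<and> (\<forall>k<n. w ! k = (False, i) \<longrightarrow> p (Suc (Suc k)) = Suc k)
      \<and> (\<forall>k<n. w ! k = (True, i) \<longrightarrow> p (Suc k) = Suc (Suc k))"
      by (rule reduced_word_generator_permutation[OF assms, of i]) (auto simp: n_def)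
  qed
  from choice[OF this] obtain \<sigma> where \<sigma>: "\<forall>i. \<sigma> i permutes {1..Suc n}
      \<and> (\<forall>k<n. w ! k = (False, i) \<longrightarrow> \<sigma> i (Suc (Suc k)) = Suc k)
      \<and> (\<forall>k<n. w ! k = (True, i) \<longrightarrow> \<sigma> i (Suc k) = Suc (Suc k))" ..
  have perm: "\<And>i. \<sigma> i permutes {1..Suc n}"
    and pos: "\<And>i k. k < n \<Longrightarrow> w ! k = (False, i) \<Longrightarrow> \<sigma> i (Suc (Suc k)) = Suc k"
    and neg: "\<And>i k. k < n \<Longrightarrow> w ! k = (True, i) \<Longrightarrow> \<sigma> i (Suc k) = Suc (Suc k)"
    using \<sigma> by blast+
  have letter_step: "letter_perm \<sigma> (w ! k) (Suc (Suc k)) = Suc k" if "k < n" for k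
  proof (cases "w ! k")
    case (Pair b i)
    show ?thesis
    proof (cases b)
      case True
      have "inv' (\<sigma> i) (\<sigma> i (Suc k)) = Suc k"
        using permutes_inj[OF perm] by (simp add: inv_f_f)
      then show ?thesis using neg[OF that] Pair True by (simp add: letter_perm_def)
    qed (use pos[OF that] Pair in simp)
  qed
  have "word_perm \<sigma> (drop k w) (Suc n) = Suc k" if "k \<le> n" for k
    using that
  proof (induction rule: inc_induct)
    case (step k)
    then have "drop k w = w ! k # drop (Suc k) w" by (simp add: n_def Cons_nth_drop_Suc)
    then show ?case using step.IH letter_step[OF step.hyps(2)[unfolded Suc_le_eq]] by simp
  qed (simp add: n_def)
  from this[of 0] perm show ?thesis unfolding n_def by (intro that) auto
qed

lemma word_detected_by_sym_assignment:
  assumes "w \<in> carrier (free_group r)" "w \<noteq> []"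
  obtains \<sigma> where "\<sigma> \<in> sym_assignments r (Suc (length w))" "word_perm \<sigma> w \<noteq> id"
proof -
  obtain \<sigma> where perm: "\<And>i. \<sigma> i permutes {1..Suc (length w)}"
    and moves: "word_perm \<sigma> w (Suc (length w)) = 1"
    using reduced_word_perm_moves_point assms(1) by (auto simp: free_group_carrier_iff)
  define \<tau> where "\<tau> i = (if i < r then \<sigma> i else id)" for i
  have "word_perm \<tau> w = word_perm \<sigma> w"
    using assms(1) by (intro word_perm_cong) (auto simp: \<tau>_def free_group_carrier_iff)
  then have "word_perm \<tau> w (Suc (length w)) \<noteq> id (Suc (length w))" using moves assms(2) by simp
  then have "word_perm \<tau> w \<noteq> id" by auto
  moreover have "\<tau> \<in> sym_assignments r (Suc (length w))"
    using perm by (simp add: sym_assignments_def sym_group_carrier \<tau>_def)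
  ultimately show ?thesis by (intro that)
qed

lemma pullback_assignment_surj:
  assumes f: "f \<in> hom (free_group r) (free_group r)"
    and surj: "f ` carrier (free_group r) = carrier (free_group r)"
  shows "pullback_assignment r f ` sym_assignments r n = sym_assignments r n"
proof (rule endo_inj_surj[OF finite_sym_assignments])
  show "pullback_assignment r f ` sym_assignments r n \<subseteq> sym_assignments r n"
    using pullback_assignment_in_sym_assignments by blast
  show "inj_on (pullback_assignment r f) (sym_assignments r n)"
  proof (rule inj_onI)
    fix \<alpha> \<beta> assume \<alpha>: "\<alpha> \<in> sym_assignments r n" and \<beta>: "\<beta> \<in> sym_assignments r n"
      and eq: "pullback_assignment r f \<alpha> = pullback_assignment r f \<beta>"
    have "\<alpha> i = \<beta> i" if "i < r" for i
    proof -
      have "[(False, i)] \<in> f ` carrier (free_group r)"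
        using surj generator_in_free_group[OF \<open>i < r\<close>] by simp
      then obtain y where y: "y \<in> carrier (free_group r)" "f y = [(False, i)]" by (metis imageE)
      show ?thesis
        using word_perm_pullback_assignment[OF f \<alpha> y(1)] word_perm_pullback_assignment[OF f \<beta> y(1)]
        by (simp add: eq y(2))
    qed
    moreover have "\<alpha> i = \<beta> i" if "\<not> i < r" for i
      using \<alpha> \<beta> that by (simp add: sym_assignments_def)
    ultimately show "\<alpha> = \<beta>" by blast
  qed
qed

text \<open>Free groups of finite rank are Hopfian: a nontrivial kernel element is detected by a
  finite permutation representation, yet precomposition with a surjection permutes the finitely
  many such representations, so every one of them kills the kernel.\<close>

theorem free_group_hopfian:
  assumes f: "f \<in> hom (free_group r) (free_group r)"
    and surj: "f ` carrier (free_group r) = carrier (free_group r)"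
  shows "inj_on f (carrier (free_group r))"
proof -
  have "w = []" if w: "w \<in> carrier (free_group r)" and fw: "f w = []" for w
  proof (rule ccontr)
    assume "w \<noteq> []"
    then obtain \<sigma> where \<sigma>: "\<sigma> \<in> sym_assignments r (Suc (length w))" "word_perm \<sigma> w \<noteq> id"
      by (rule word_detected_by_sym_assignment[OF w])
    then have "\<sigma> \<in> pullback_assignment r f ` sym_assignments r (Suc (length w))"
      by (simp add: pullback_assignment_surj[OF f surj])
    then obtain \<tau> where \<tau>: "\<tau> \<in> sym_assignments r (Suc (length w))" "\<sigma> = pullback_assignment r f \<tau>" ..
    have "word_perm \<sigma> w = word_perm \<tau> (f w)" using word_perm_pullback_assignment[OF f \<tau>(1) w] \<tau>(2) by simp
    then show False using fw \<sigma>(2) by simp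
  qed
  then show ?thesis using inj_on_one_iff'[OF f group_free_group group_free_group] by simp
qed

section \<open>\<open>lim\<^sup>1\<close> of a constant inverse sequence\<close>

lemma uncountable_UNIV_nat_set: "uncountable (UNIV :: nat set set)"
proof
  assume "countable (UNIV :: nat set set)"
  then obtain h :: "nat set \<Rightarrow> nat" where "inj h" by (metis countableE)
  then have "surj (inv_into UNIV h)" by (rule inj_imp_surj_inv)
  then show False using Cantors_theorem by (metis Pow_UNIV)
qed

context group
begin

lemma lim1_rel_refl:
  assumes "a \<in> hom G G" "x \<in> UNIV \<rightarrow> carrier G"
  shows "(x, x) \<in> lim1_rel G a"
  using assms hom_one[OF assms(1) is_group is_group]
  by (auto simp: lim1_rel_def Pi_iff intro!: exI[of _ "\<lambda>_. \<one>"])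

lemma lim1_trivial_iff_all_related:
  assumes a: "a \<in> hom G G"
  shows "lim1_trivial G a \<longleftrightarrow> (\<forall>x \<in> UNIV \<rightarrow> carrier G. \<forall>y \<in> UNIV \<rightarrow> carrier G. (x, y) \<in> lim1_rel G a)"
    (is "_ \<longleftrightarrow> (\<forall>x \<in> ?A. \<forall>y \<in> ?A. (x, y) \<in> ?R)")
proof
  assume "lim1_trivial G a"
  then obtain C where C: "lim1 G a = {C}" by (auto simp: lim1_trivial_def is_singleton_def)
  have class_eq: "?R `` {x} = C" if "x \<in> ?A" for x
    using quotientI[OF that, of ?R] C by (simp add: lim1_def)
  show "\<forall>x \<in> ?A. \<forall>y \<in> ?A. (x, y) \<in> ?R"
  proof (intro ballI)
    fix x y assume x: "x \<in> ?A" and y: "y \<in> ?A"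
    have "y \<in> ?R `` {y}" using lim1_rel_refl[OF a y] by simp
    then have "y \<in> ?R `` {x}" using class_eq[OF x] class_eq[OF y] by simp
    then show "(x, y) \<in> ?R" by simp
  qed
next
  assume all: "\<forall>x \<in> ?A. \<forall>y \<in> ?A. (x, y) \<in> ?R"
  have "?R `` {x} = ?A" if "x \<in> ?A" for x
  proof
    show "?R `` {x} \<subseteq> ?A" by (auto simp: lim1_rel_def)
    show "?A \<subseteq> ?R `` {x}" using all that by blast
  qed
  moreover have "(\<lambda>_. \<one>) \<in> ?A" by simp
  ultimately have "?A // ?R = {?A}" unfolding quotient_def by blast
  then show "lim1_trivial G a" by (simp add: lim1_trivial_def lim1_def)
qed

lemma lim1_trivial_if_surj:
  assumes a: "a \<in> hom G G" and surj: "a ` carrier G = carrier G"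
  shows "lim1_trivial G a"
proof -
  interpret a: group_hom G G a by (simp add: group_hom_def group_hom_axioms_def a)
  have "(x, y) \<in> lim1_rel G a" if x: "x \<in> UNIV \<rightarrow> carrier G" and y: "y \<in> UNIV \<rightarrow> carrier G" for x y
  proof -
    have xC: "x n \<in> carrier G" and yC: "y n \<in> carrier G" for n using x y by auto
    define g where "g = rec_nat \<one> (\<lambda>n gn. inv_into (carrier G) a (inv (y n) \<otimes> gn \<otimes> x n))"
    have gC: "g n \<in> carrier G" for n
      by (induction n) (auto simp: g_def xC yC intro!: inv_into_into simp: surj)
    have "a (g (Suc n)) = inv (y n) \<otimes> g n \<otimes> x n" for n
      using gC[of n] by (simp add: g_def f_inv_into_f surj xC yC)
    then have "y n = g n \<otimes> x n \<otimes> a (inv (g (Suc n)))" for n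
      using xC yC gC by (simp add: m_assoc inv_mult_group) (simp add: m_assoc[symmetric])
    then show ?thesis using x y gC by (auto simp: lim1_rel_def intro!: exI[of _ g])
  qed
  then show ?thesis by (simp add: lim1_trivial_iff_all_related[OF a])
qed

text \<open>The gauge satisfies \<open>g n = y n \<otimes> a (g (n + 1))\<close>, and since \<open>c \<otimes> a x = a x'\<close> would put
  \<open>c\<close> into the image, the values \<open>y n \<in> {c, \<one>}\<close> are recovered one by one from \<open>g 0\<close>.\<close>

lemma lim1_nontrivial_if_inj_not_surj:
  assumes countable: "countable (carrier G)" and a: "a \<in> hom G G"
    and inj: "inj_on a (carrier G)" and c: "c \<in> carrier G" "c \<notin> a ` carrier G"
  shows "\<not> lim1_trivial G a"
proof
  assume trivial: "lim1_trivial G a"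
  interpret a: group_hom G G a by (simp add: group_hom_def group_hom_axioms_def a)
  define y where "y \<beta> n = (if n \<in> \<beta> then c else \<one>)" for \<beta> :: "nat set" and n
  have yC: "y \<beta> n \<in> carrier G" for \<beta> n using c by (simp add: y_def)
  have "\<forall>\<beta>. \<exists>g. (\<forall>n. g n \<in> carrier G) \<and> (\<forall>n. y \<beta> n = g n \<otimes> \<one> \<otimes> a (inv (g (Suc n))))"
  proof
    fix \<beta>
    have "((\<lambda>_. \<one>), y \<beta>) \<in> lim1_rel G a"
      using trivial yC by (simp add: lim1_trivial_iff_all_related[OF a])
    then show "\<exists>g. (\<forall>n. g n \<in> carrier G) \<and> (\<forall>n. y \<beta> n = g n \<otimes> \<one> \<otimes> a (inv (g (Suc n))))"
      by (simp only: lim1_rel_def mem_Collect_eq case_prod_conv)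
  qed
  from choice[OF this] obtain g where
    "\<forall>\<beta>. (\<forall>n. g \<beta> n \<in> carrier G) \<and> (\<forall>n. y \<beta> n = g \<beta> n \<otimes> \<one> \<otimes> a (inv (g \<beta> (Suc n))))" ..
  then have gC: "\<And>\<beta> n. g \<beta> n \<in> carrier G"
    and gy: "\<And>\<beta> n. y \<beta> n = g \<beta> n \<otimes> \<one> \<otimes> a (inv (g \<beta> (Suc n)))"
    by simp_all
  have rec: "g \<beta> n = y \<beta> n \<otimes> a (g \<beta> (Suc n))" for \<beta> n
    using gy[of \<beta> n] gC yC by (simp add: inv_solve_right)
  have c_not_one: "c \<noteq> \<one>" using c a.hom_one by force
  have cancel: "u = u' \<and> x = x'"
    if eq: "u \<otimes> a x = u' \<otimes> a x'" and "u \<in> {c, \<one>}" "u' \<in> {c, \<one>}"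
      and x: "x \<in> carrier G" "x' \<in> carrier G"
    for u u' x x'
  proof -
    have no_mix: False if "c \<otimes> a z = a z'" "z \<in> carrier G" "z' \<in> carrier G" for z z'
    proof -
      have "c = a (z' \<otimes> inv z)" using that c by (simp add: inv_solve_right)
      then show False using c that by blast
    qed
    have "u = u'" using that no_mix[of x x'] no_mix[of x' x] by (auto dest: sym)
    moreover have "u' \<in> carrier G" using that(3) c by auto
    ultimately have "a x = a x'" using eq x by simp
    then show ?thesis using \<open>u = u'\<close> x inj by (simp add: inj_on_def)
  qed
  have "inj (\<lambda>\<beta>. g \<beta> 0)"
  proof (rule injI)
    fix \<beta> \<beta>' assume start: "g \<beta> 0 = g \<beta>' 0"
    have step: "y \<beta> n = y \<beta>' n \<and> g \<beta> (Suc n) = g \<beta>' (Suc n)" if "g \<beta> n = g \<beta>' n" for n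
      using cancel[of "y \<beta> n" "g \<beta> (Suc n)" "y \<beta>' n" "g \<beta>' (Suc n)"] rec[of \<beta> n] rec[of \<beta>' n] that gC
      by (simp add: y_def)
    have "g \<beta> n = g \<beta>' n" for n by (induction n) (use start step in auto)
    then have y_eq: "y \<beta> n = y \<beta>' n" for n using step by blast
    have "n \<in> \<beta> \<longleftrightarrow> n \<in> \<beta>'" for n using y_eq[of n] c_not_one by (auto simp: y_def split: if_splits)
    then show "\<beta> = \<beta>'" by blast
  qed
  moreover have "countable (range (\<lambda>\<beta>. g \<beta> 0))"
    using gC by (intro countable_subset[OF _ countable]) auto
  ultimately have "countable (UNIV :: nat set set)" by (blast intro: countable_image_inj_on)
  then show False using uncountable_UNIV_nat_set by blast
qed

end

section \<open>The abelianisation\<close>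

definition Zr_group :: "nat \<Rightarrow> (nat \<Rightarrow> int) monoid" where
  "Zr_group r = \<lparr>carrier = Zr r, monoid.mult = (\<lambda>u v i. u i + v i), one = (\<lambda>_. 0)\<rparr>"

lemma group_Zr_group: "group (Zr_group r)"
proof (rule groupI)
  fix x assume x: "x \<in> carrier (Zr_group r)"
  show "\<exists>y\<in>carrier (Zr_group r). y \<otimes>\<^bsub>Zr_group r\<^esub> x = \<one>\<^bsub>Zr_group r\<^esub>"
    using x by (intro bexI[of _ "\<lambda>i. - x i"]) (auto simp: Zr_group_def Zr_def)
qed (auto simp: Zr_group_def Zr_def add.assoc)

lemma ab_Nil [simp]: "ab [] = (\<lambda>_. 0)"
  by (simp add: ab_def fun_eq_iff)

lemma ab_Cons: "ab (l # w) i = (if snd l = i then if fst l then -1 else 1 else 0) + ab w i"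
  by (simp add: ab_def)

lemma ab_append: "ab (u @ v) i = ab u i + ab v i"
  by (simp add: ab_def)

lemma ab_reduce: "ab (reduce w) = ab w"
proof -
  have cons_red: "ab (cons_red l v) i = ab (l # v) i" for l v i
    by (cases v) (auto simp: ab_Cons inv_letter_def)
  have "ab (reduce_onto w z) i = ab w i + ab z i" for z i
    by (induction w) (auto simp: cons_red ab_Cons)
  from this[of "[]"] show ?thesis by (simp add: reduce_def fun_eq_iff)
qed

lemma ab_in_Zr:
  assumes "w \<in> carrier (free_group r)"
  shows "ab w \<in> Zr r"
proof -
  have "\<forall>x\<in>set w. snd x < r" using assms by (simp add: free_group_carrier_iff)
  then show ?thesis by (induction w) (auto simp: Zr_def ab_Cons)
qed

lemma ab_hom: "ab \<in> hom (free_group r) (Zr_group r)"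
  by (rule homI) (simp_all add: Zr_group_def ab_in_Zr free_group_mult ab_reduce ab_append fun_eq_iff)

lemma s_ab_hom: "s_ab r f \<in> hom (Zr_group r) (Zr_group r)"
  by (rule homI) (auto simp: Zr_group_def Zr_def s_ab_def algebra_simps sum.distrib)

lemma ab_natural:
  assumes f: "f \<in> hom (free_group r) (free_group r)" and u: "u \<in> carrier (free_group r)"
  shows "ab (f u) = s_ab r f (ab u)"
proof -
  have "(ab \<circ> f) u = (s_ab r f \<circ> ab) u"
  proof (rule free_group_hom_ext[OF group_Zr_group _ _ _ u])
    show "ab \<circ> f \<in> hom (free_group r) (Zr_group r)" using f ab_hom by (rule hom_compose)
    show "s_ab r f \<circ> ab \<in> hom (free_group r) (Zr_group r)" using ab_hom s_ab_hom by (rule hom_compose)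
  next
    fix i assume i: "i < r"
    have "ab [(False, i)] k = (if i = k then 1 else 0)" for k by (simp add: ab_Cons)
    then have "s_ab r f (ab [(False, i)]) j = (if j < r then ab (f [(False, i)]) j else 0)" for j
      using i by (simp add: s_ab_def if_distrib[of "\<lambda>x. x * _"] cong: if_cong)
    moreover have "ab (f [(False, i)]) \<in> Zr r"
      using ab_in_Zr hom_in_carrier[OF f generator_in_free_group[OF i]] by blast
    ultimately show "(ab \<circ> f) [(False, i)] = (s_ab r f \<circ> ab) [(False, i)]"
      by (auto simp: fun_eq_iff Zr_def)
  qed
  then show ?thesis by simp
qed

lemma ab_concat: "ab (concat ws) i = (\<Sum>w\<leftarrow>ws. ab w i)"
  by (induction ws) (simp_all add: ab_append)

lemma ab_replicate: "ab (replicate m (b, k)) i = (if k = i then if b then - int m else int m else 0)"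
  by (induction m) (auto simp: ab_Cons)

lemma ab_image: "ab ` carrier (free_group r) = Zr r"
proof
  show "ab ` carrier (free_group r) \<subseteq> Zr r" using ab_in_Zr by blast
next
  show "Zr r \<subseteq> ab ` carrier (free_group r)"
  proof
    fix v assume v: "v \<in> Zr r"
    define w where "w = concat (map (\<lambda>k. replicate (nat \<bar>v k\<bar>) (v k < 0, k)) [0..<r])"
    have "ab w i = v i" for i
    proof -
      have "ab w i = (\<Sum>k\<leftarrow>[0..<r]. if k = i then v k else 0)"
        by (simp add: w_def ab_concat ab_replicate comp_def cong: if_cong)
      also have "\<dots> = v i" using v by (simp add: sum_list_distinct_conv_sum_set Zr_def)
      finally show ?thesis .
    qed
    then have "ab (reduce w) = v" by (simp add: ab_reduce fun_eq_iff)
    moreover have "reduce w \<in> carrier (free_group r)"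
      using set_reduce[of w] by (auto simp: free_group_carrier_iff reduced_reduce w_def)
    ultimately show "v \<in> ab ` carrier (free_group r)" by blast
  qed
qed

lemma s_ab_inverse:
  assumes f: "f \<in> hom (free_group r) (free_group r)" and g: "g \<in> hom (free_group r) (free_group r)"
    and fg: "\<And>u. u \<in> carrier (free_group r) \<Longrightarrow> f (g u) = u" and v: "v \<in> Zr r"
  shows "s_ab r f (s_ab r g v) = v"
proof -
  obtain u where u: "u \<in> carrier (free_group r)" "v = ab u" using v ab_image by blast
  have "s_ab r f (s_ab r g (ab u)) = ab (f (g u))"
    using u(1) hom_in_carrier[OF g u(1)] by (simp add: ab_natural[OF f] ab_natural[OF g])
  then show ?thesis using u fg by simp
qed

lemma bij_s_ab_if_iso:
  assumes s: "s \<in> iso (free_group r) (free_group r)"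
  shows "bij_betw (s_ab r s) (Zr r) (Zr r)"
proof -
  let ?t = "inv_into (carrier (free_group r)) s"
  have bij: "bij_betw s (carrier (free_group r)) (carrier (free_group r))"
    using s by (simp add: iso_def)
  have "?t \<in> iso (free_group r) (free_group r)"
    using s by (rule group.iso_set_sym[OF group_free_group])
  then have t: "?t \<in> hom (free_group r) (free_group r)" by (simp add: iso_def)
  have s_hom: "s \<in> hom (free_group r) (free_group r)" using s by (simp add: iso_def)
  show ?thesis
  proof (rule bij_betw_byWitness[where f' = "s_ab r ?t"])
    show "\<forall>v\<in>Zr r. s_ab r ?t (s_ab r s v) = v"
      using bij by (auto intro: s_ab_inverse[OF t s_hom] simp: bij_betw_inv_into_left)
    show "\<forall>v\<in>Zr r. s_ab r s (s_ab r ?t v) = v"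
      using bij by (auto intro: s_ab_inverse[OF s_hom t] simp: bij_betw_inv_into_right)
    show "s_ab r s ` Zr r \<subseteq> Zr r" "s_ab r ?t ` Zr r \<subseteq> Zr r"
      by (auto simp: s_ab_def Zr_def)
  qed
qed

lemma inj_on_if_image_iso_free_group:
  assumes hom: "s \<in> hom (free_group r) (free_group r)"
    and im_free: "(free_group r)\<lparr>carrier := s ` carrier (free_group r)\<rparr> \<cong> free_group r"
  shows "inj_on s (carrier (free_group r))"
proof -
  let ?C = "carrier (free_group r)" and ?H = "(free_group r)\<lparr>carrier := s ` carrier (free_group r)\<rparr>"
  obtain h where h: "h \<in> iso ?H (free_group r)" using im_free by (auto simp: is_iso_def)
  then have h_bij: "bij_betw h (s ` ?C) ?C" by (simp add: iso_def)
  have "h \<circ> s \<in> hom (free_group r) (free_group r)"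
  proof (rule homI)
    fix x assume "x \<in> ?C"
    then show "(h \<circ> s) x \<in> ?C" using h_bij by (auto simp: bij_betw_def)
  next
    fix x y assume "x \<in> ?C" "y \<in> ?C"
    then show "(h \<circ> s) (x \<otimes>\<^bsub>free_group r\<^esub> y) = (h \<circ> s) x \<otimes>\<^bsub>free_group r\<^esub> (h \<circ> s) y"
      using h hom by (auto simp: iso_def hom_def)
  qed
  moreover have "(h \<circ> s) ` ?C = ?C" using h_bij by (simp add: bij_betw_def image_comp)
  ultimately have "inj_on (h \<circ> s) ?C" by (rule free_group_hopfian)
  then show ?thesis by (rule inj_on_imageI2)
qed

theorem proposition4p6:
  fixes r :: nat and s :: "letter list \<Rightarrow> letter list"
  assumes hom: "s \<in> hom (free_group r) (free_group r)"
    and im_free: "(free_group r)\<lparr>carrier := s ` carrier (free_group r)\<rparr> \<cong> free_group r"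
  shows "(lim1_trivial (free_group r) s \<longleftrightarrow> s \<in> iso (free_group r) (free_group r))
       \<and> (\<not> bij_betw (s_ab r s) (Zr r) (Zr r) \<longrightarrow> \<not> lim1_trivial (free_group r) s)"
proof -
  interpret F: group "free_group r" by (rule group_free_group)
  let ?C = "carrier (free_group r)"
  have inj: "inj_on s ?C" using hom im_free by (rule inj_on_if_image_iso_free_group)
  have "lim1_trivial (free_group r) s \<longleftrightarrow> s ` ?C = ?C"
  proof
    assume trivial: "lim1_trivial (free_group r) s"
    show "s ` ?C = ?C"
    proof (rule ccontr)
      assume "s ` ?C \<noteq> ?C"
      then obtain c where "c \<in> ?C" "c \<notin> s ` ?C" using hom_carrier[OF hom] by blast
      then show False
        using F.lim1_nontrivial_if_inj_not_surj[OF countable_free_group_carrier hom inj] trivial by blast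
    qed
  qed (rule F.lim1_trivial_if_surj[OF hom])
  also have "\<dots> \<longleftrightarrow> s \<in> iso (free_group r) (free_group r)"
    using hom inj by (auto simp: iso_def bij_betw_def)
  finally show ?thesis using bij_s_ab_if_iso by blast
qed

end
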